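(* For any finite simple graphs $G$ and $H$, the strong product graph $G\boxtimes H$ is homotopic to the Cartesian simplex product graph $G\times H$.
   Context: For graphs $G=(V,E)$, $H=(W,F)$ the strong product $G\boxtimes H$ has vertex set $V\times W$, and distinct $(a,b),(c,d)$ are adjacent iff ($a=c$ and $\{b,d\}\in F$) or ($b=d$ and $\{a,c\}\in E$) or ($\{a,c\}\in E$ and $\{b,d\}\in F$). A simplex of a graph is the vertex set of a nonempty complete subgraph. The Cartesian simplex product $G\times H$ is the graph whose vertices are the pairs $(x,y)$ with $x$ a simplex of $G$ and $y$ a simplex of $H$, two distinct vertices $(x,y),(u,v)$ being adjacent iff ($x\subseteq u$ and $y\subseteq v$) or ($u\subseteq x$ and $v\subseteq y$). Homotopy of graphs is combinatorial (Ivashchenko/Evako style): the unit sphere $S(x)$ of a vertex $x$ is the subgraph induced by its neighbours; $K_1$ is contractible, and inductively a graph is contractible if it has a vertex $x$ such that $S(x)$ and $G\setminus x$ are contractible. A homotopy step is either removing a vertex whose unit sphere is contractible (together with its edges), or the inverse operation of adding a new vertex joined exactly to the vertices of a contractible induced subgraph. Two graphs are homotopic if they are related by a finite sequence of homotopy steps (and graph isomorphisms). *)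

theory Defs
  imports Main
begin

type_synonym 'a graph = "'a set \<times> 'a set set"

definition verts :: "'a graph \<Rightarrow> 'a set" where "verts G = fst G"
definition edges :: "'a graph \<Rightarrow> 'a set set" where "edges G = snd G"

definition finite_simple_graph :: "'a graph \<Rightarrow> bool" where
  "finite_simple_graph G \<longleftrightarrow> finite (verts G) \<and>
     (\<forall>e\<in>edges G. \<exists>a b. a \<noteq> b \<and> a \<in> verts G \<and> b \<in> verts G \<and> e = {a, b})"

definition induced :: "'a graph \<Rightarrow> 'a set \<Rightarrow> 'a graph" where
  "induced G A = (A \<inter> verts G, {e \<in> edges G. e \<subseteq> A})"

definition sphere :: "'a graph \<Rightarrow> 'a \<Rightarrow> 'a graph" where
  "sphere G x = induced G {y. {x, y} \<in> edges G}"

definition delv :: "'a graph \<Rightarrow> 'a \<Rightarrow> 'a graph" where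
  "delv G x = induced G (verts G - {x})"

inductive contractible :: "'a graph \<Rightarrow> bool" where
  K1: "contractible ({v}, {})"
| step: "x \<in> verts G \<Longrightarrow> contractible (sphere G x) \<Longrightarrow> contractible (delv G x)
         \<Longrightarrow> contractible G"

definition simplices :: "'a graph \<Rightarrow> 'a set set" where
  "simplices G = {A. A \<noteq> {} \<and> A \<subseteq> verts G \<and>
      (\<forall>a\<in>A. \<forall>b\<in>A. a \<noteq> b \<longrightarrow> {a, b} \<in> edges G)}"

definition strong_prod :: "'a graph \<Rightarrow> 'b graph \<Rightarrow> ('a \<times> 'b) graph" where
  "strong_prod G H = (verts G \<times> verts H,
     {{(a, b), (c, d)} | a b c d. a \<in> verts G \<and> c \<in> verts G \<and> b \<in> verts H \<and> d \<in> verts H \<and>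
        (a, b) \<noteq> (c, d) \<and>
        ((a = c \<and> {b, d} \<in> edges H) \<or> (b = d \<and> {a, c} \<in> edges G) \<or>
         ({a, c} \<in> edges G \<and> {b, d} \<in> edges H))})"

definition simplex_prod :: "'a graph \<Rightarrow> 'b graph \<Rightarrow> ('a set \<times> 'b set) graph" where
  "simplex_prod G H = (simplices G \<times> simplices H,
     {{(x, y), (u, v)} | x y u v. x \<in> simplices G \<and> u \<in> simplices G \<and>
        y \<in> simplices H \<and> v \<in> simplices H \<and> (x, y) \<noteq> (u, v) \<and>
        ((x \<subseteq> u \<and> y \<subseteq> v) \<or> (u \<subseteq> x \<and> v \<subseteq> y))})"

definition gmap :: "('a \<Rightarrow> 'b) \<Rightarrow> 'a graph \<Rightarrow> 'b graph" where
  "gmap f G = (f ` verts G, (\<lambda>e. f ` e) ` edges G)"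

definition graph_iso :: "'a graph \<Rightarrow> 'a graph \<Rightarrow> bool" where
  "graph_iso G G' \<longleftrightarrow> (\<exists>f. inj_on f (verts G) \<and> G' = gmap f G)"

text \<open>One homotopy step (on graphs over a common vertex universe): removing a vertex
with contractible unit sphere, the inverse operation (adding a vertex whose unit
sphere is a contractible induced subgraph), or a graph isomorphism.\<close>
definition removal_step :: "'a graph \<Rightarrow> 'a graph \<Rightarrow> bool" where
  "removal_step G G' \<longleftrightarrow>
     (\<exists>x\<in>verts G. contractible (sphere G x) \<and> G' = delv G x)"

definition homotopy_step :: "'a graph \<Rightarrow> 'a graph \<Rightarrow> bool" where
  "homotopy_step G G' \<longleftrightarrow> finite_simple_graph G \<and> finite_simple_graph G' \<and>
     (removal_step G G' \<or> removal_step G' G \<or> graph_iso G G')"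

text \<open>Homotopy between graphs with possibly different vertex types: embed both
(isomorphically) into graphs on nat, which leaves room for new vertices, and
connect them by a finite sequence of homotopy steps.\<close>
definition homotopic :: "'a graph \<Rightarrow> 'b graph \<Rightarrow> bool" where
  "homotopic G H \<longleftrightarrow> (\<exists>(f::'a \<Rightarrow> nat) (g::'b \<Rightarrow> nat).
      inj_on f (verts G) \<and> inj_on g (verts H) \<and>
      homotopy_step\<^sup>*\<^sup>* (gmap f G) (gmap g H))"

end

theory Submission
  imports Defs "HOL-Library.Product_Order"
begin

(* Glue the two products into one graph: on the vertex pairs of G and H take the strong
   product, on the pairs of simplices (x, y) take the comparability graph of the
   componentwise inclusion order, and join (a, b) to (x, y) whenever a \<in> x and b \<in> y.
   Starting from the strong product, add the simplex pairs one at a time, always a maximal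
   one: the unit sphere of a new vertex (x, y) is the clique x \<times> y together with the
   simplex pairs strictly below (x, y), which collapses (remove a maximal simplex pair,
   whose unit sphere has the same shape) onto the clique, a cone. Then delete the vertex
   pairs one at a time: the unit sphere of (a, b) consists of its remaining strong
   neighbours and the simplex pairs above ({a}, {b}); deleting those neighbours (their
   spheres have the same shape, with a larger bottom simplex pair) leaves a cone with apex
   ({a}, {b}). Each addition and deletion is a homotopy step, and what remains is the
   Cartesian simplex product. *)

lemma setcompr_Pair_Pair: "{f (a, b) (c, d) | a b c d. P (a, b) (c, d)} = {f p q | p q. P p q}"
  by (metis (no_types, opaque_lifting) prod.collapse)

lemma graph_eqI: "verts G = verts G' \<Longrightarrow> edges G = edges G' \<Longrightarrow> G = G'"
  by (simp add: verts_def edges_def prod_eq_iff)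

lemma edges_Pair: "edges (V, E) = E"
  by (simp add: edges_def)

lemma verts_induced [simp]: "verts (induced G A) = A \<inter> verts G"
  by (simp add: induced_def verts_def)

lemma edges_induced [simp]: "edges (induced G A) = {e \<in> edges G. e \<subseteq> A}"
  by (simp add: induced_def edges_def)

definition rel_graph :: "('v \<Rightarrow> 'w) \<Rightarrow> 'v set \<Rightarrow> ('v \<Rightarrow> 'v \<Rightarrow> bool) \<Rightarrow> 'w graph" where
  "rel_graph h V R = (h ` V, {{h a, h b} | a b. a \<in> V \<and> b \<in> V \<and> a \<noteq> b \<and> R a b})"

definition rel_nbrs :: "'v set \<Rightarrow> ('v \<Rightarrow> 'v \<Rightarrow> bool) \<Rightarrow> 'v \<Rightarrow> 'v set" where
  "rel_nbrs V R x = {y \<in> V. y \<noteq> x \<and> (R x y \<or> R y x)}"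

lemma verts_rel_graph [simp]: "verts (rel_graph h V R) = h ` V"
  by (simp add: rel_graph_def verts_def)

lemma edges_rel_graph:
  "edges (rel_graph h V R) = {{h a, h b} | a b. a \<in> V \<and> b \<in> V \<and> a \<noteq> b \<and> R a b}"
  by (simp add: rel_graph_def edges_def)

lemma rel_nbrs_subset: "rel_nbrs V R x \<subseteq> V - {x}"
  by (auto simp: rel_nbrs_def)

lemma finite_simple_graph_rel_graph:
  assumes "finite V" "inj_on h V"
  shows "finite_simple_graph (rel_graph h V R)"
  unfolding finite_simple_graph_def edges_rel_graph
proof (intro conjI ballI)
  fix e assume "e \<in> {{h a, h b} | a b. a \<in> V \<and> b \<in> V \<and> a \<noteq> b \<and> R a b}"
  then obtain a b where "e = {h a, h b}" "a \<in> V" "b \<in> V" "a \<noteq> b"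
    by blast
  with assms(2)
  show "\<exists>a b. a \<noteq> b \<and> a \<in> verts (rel_graph h V R) \<and> b \<in> verts (rel_graph h V R) \<and> e = {a, b}"
    by (intro exI[of _ "h a"] exI[of _ "h b"]) (simp add: inj_on_eq_iff)
qed (simp add: assms(1))

lemma induced_rel_graph:
  assumes "inj_on h V" "W \<subseteq> V"
  shows "induced (rel_graph h V R) (h ` W) = rel_graph h W R"
proof -
  have "{h a, h b} \<subseteq> h ` W \<longleftrightarrow> a \<in> W \<and> b \<in> W" if "a \<in> V" "b \<in> V" for a b
    using assms that by (simp add: inj_on_image_mem_iff)
  then have "{e \<in> edges (rel_graph h V R). e \<subseteq> h ` W} = edges (rel_graph h W R)"
    using assms(2) unfolding edges_rel_graph
    by (intro set_eqI iffI; clarsimp) blast+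
  moreover have "h ` W \<inter> h ` V = h ` W"
    using assms(2) by blast
  ultimately show ?thesis
    by (intro graph_eqI) simp_all
qed

lemma edge_rel_graph_iff:
  assumes "inj_on h V" "x \<in> V"
  shows "{h x, z} \<in> edges (rel_graph h V R) \<longleftrightarrow> z \<in> h ` rel_nbrs V R x"
proof
  assume "{h x, z} \<in> edges (rel_graph h V R)"
  then obtain a b where "{h x, z} = {h a, h b}" "a \<in> V" "b \<in> V" "a \<noteq> b" "R a b"
    unfolding edges_rel_graph by blast
  with assms show "z \<in> h ` rel_nbrs V R x"
    by (auto simp: rel_nbrs_def doubleton_eq_iff inj_on_eq_iff)
next
  assume "z \<in> h ` rel_nbrs V R x"
  then obtain y where "y \<in> V" "y \<noteq> x" "R x y \<or> R y x" "z = h y"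
    by (auto simp: rel_nbrs_def)
  then have "{h x, z} = {h x, h y} \<and> {h x, z} = {h y, h x}"
    by auto
  with \<open>y \<in> V\<close> \<open>y \<noteq> x\<close> \<open>R x y \<or> R y x\<close> assms(2) show "{h x, z} \<in> edges (rel_graph h V R)"
    unfolding edges_rel_graph by blast
qed

lemma sphere_rel_graph:
  assumes "inj_on h V" "x \<in> V"
  shows "sphere (rel_graph h V R) (h x) = rel_graph h (rel_nbrs V R x) R"
  using induced_rel_graph[OF assms(1) rel_nbrs_subset[THEN subset_trans, OF Diff_subset]]
    edge_rel_graph_iff[OF assms]
  by (simp add: sphere_def)

lemma delv_rel_graph:
  assumes "inj_on h V" "x \<in> V"
  shows "delv (rel_graph h V R) (h x) = rel_graph h (V - {x}) R"
proof -
  have "h ` V - {h x} = h ` (V - {x})"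
    using assms by (auto simp: inj_on_eq_iff)
  then show ?thesis
    using induced_rel_graph[OF assms(1), of "V - {x}" R] by (simp add: delv_def)
qed

lemma contractible_rel_graph_step:
  assumes "inj_on h V" "x \<in> V"
    and "contractible (rel_graph h (rel_nbrs V R x) R)" "contractible (rel_graph h (V - {x}) R)"
  shows "contractible (rel_graph h V R)"
  by (rule contractible.step[of "h x"]) (use assms in \<open>simp_all add: sphere_rel_graph delv_rel_graph\<close>)

lemma rel_graph_singleton: "rel_graph h {c} R = ({h c}, {})"
  by (simp add: rel_graph_def)

lemma contractible_rel_graph_cone:
  assumes "finite V" "inj_on h V" "c \<in> V" "\<And>y. y \<in> V \<Longrightarrow> y \<noteq> c \<Longrightarrow> R c y \<or> R y c"
  shows "contractible (rel_graph h V R)"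
  using assms
proof (induction V rule: finite_psubset_induct)
  case (psubset V)
  show ?case
  proof (cases "V = {c}")
    case True
    then show ?thesis
      by (simp add: rel_graph_singleton contractible.K1)
  next
    case False
    then obtain y where y: "y \<in> V" "y \<noteq> c"
      using psubset.prems(2) by blast
    have "rel_nbrs V R y \<subset> V" "c \<in> rel_nbrs V R y"
      using rel_nbrs_subset[of V R y] y psubset.prems(2,3) unfolding rel_nbrs_def by blast+
    moreover have "\<And>z. z \<in> rel_nbrs V R y \<Longrightarrow> z \<noteq> c \<Longrightarrow> R c z \<or> R z c"
      using psubset.prems(3) by (simp add: rel_nbrs_def)
    ultimately have "contractible (rel_graph h (rel_nbrs V R y) R)"
      using inj_on_subset[OF psubset.prems(1)] by (intro psubset.IH) auto
    moreover have "contractible (rel_graph h (V - {y}) R)"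
      using inj_on_subset[OF psubset.prems(1)] psubset.prems(2,3) y
      by (intro psubset.IH) auto
    ultimately show ?thesis
      by (rule contractible_rel_graph_step[OF psubset.prems(1) y(1)])
  qed
qed

lemma homotopy_step_rel_graph:
  assumes "finite V" "inj_on h V" "x \<in> V" "contractible (rel_graph h (rel_nbrs V R x) R)"
  shows "homotopy_step (rel_graph h V R) (rel_graph h (V - {x}) R)"
    and "homotopy_step (rel_graph h (V - {x}) R) (rel_graph h V R)"
proof -
  have "removal_step (rel_graph h V R) (rel_graph h (V - {x}) R)"
    using assms unfolding removal_step_def
    by (intro bexI[of _ "h x"]) (simp_all add: sphere_rel_graph delv_rel_graph)
  moreover have "finite_simple_graph (rel_graph h V R)" "finite_simple_graph (rel_graph h (V - {x}) R)"
    using assms by (auto intro!: finite_simple_graph_rel_graph intro: inj_on_subset)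
  ultimately show "homotopy_step (rel_graph h V R) (rel_graph h (V - {x}) R)"
    and "homotopy_step (rel_graph h (V - {x}) R) (rel_graph h V R)"
    by (simp_all add: homotopy_step_def)
qed

lemma gmap_rel_graph: "gmap f (rel_graph g V R) = rel_graph (f \<circ> g) V R"
proof -
  have "(`) f ` {{g a, g b} | a b. a \<in> V \<and> b \<in> V \<and> a \<noteq> b \<and> R a b}
      = {{f (g a), f (g b)} | a b. a \<in> V \<and> b \<in> V \<and> a \<noteq> b \<and> R a b}"
  proof (intro set_eqI iffI)
    fix e assume "e \<in> {{f (g a), f (g b)} | a b. a \<in> V \<and> b \<in> V \<and> a \<noteq> b \<and> R a b}"
    then obtain a b where "e = f ` {g a, g b}" "a \<in> V" "b \<in> V" "a \<noteq> b" "R a b"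
      by auto
    then show "e \<in> (`) f ` {{g a, g b} | a b. a \<in> V \<and> b \<in> V \<and> a \<noteq> b \<and> R a b}"
      by blast
  qed auto
  then show ?thesis
    by (simp add: gmap_def rel_graph_def verts_def edges_def image_comp)
qed

lemma rel_graph_comp_inj:
  assumes "inj k"
  shows "rel_graph (h \<circ> k) V (\<lambda>p q. R (k p) (k q)) = rel_graph h (k ` V) R"
proof -
  have "{{h (k a), h (k b)} | a b. a \<in> V \<and> b \<in> V \<and> a \<noteq> b \<and> R (k a) (k b)}
      = {{h a, h b} | a b. a \<in> k ` V \<and> b \<in> k ` V \<and> a \<noteq> b \<and> R a b}"
  proof (intro set_eqI iffI)
    fix e assume "e \<in> {{h (k a), h (k b)} | a b. a \<in> V \<and> b \<in> V \<and> a \<noteq> b \<and> R (k a) (k b)}"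
    then obtain a b
      where "e = {h (k a), h (k b)}" "k a \<in> k ` V" "k b \<in> k ` V" "k a \<noteq> k b" "R (k a) (k b)"
      using assms by (auto simp: inj_eq)
    then show "e \<in> {{h a, h b} | a b. a \<in> k ` V \<and> b \<in> k ` V \<and> a \<noteq> b \<and> R a b}"
      by blast
  next
    fix e assume "e \<in> {{h a, h b} | a b. a \<in> k ` V \<and> b \<in> k ` V \<and> a \<noteq> b \<and> R a b}"
    then obtain a b where "e = {h (k a), h (k b)}" "a \<in> V" "b \<in> V" "a \<noteq> b" "R (k a) (k b)"
      by auto
    then show "e \<in> {{h (k a), h (k b)} | a b. a \<in> V \<and> b \<in> V \<and> a \<noteq> b \<and> R (k a) (k b)}"
      by blast
  qed
  then show ?thesis
    by (simp add: rel_graph_def image_comp)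
qed

lemma simplices_subset_verts: "x \<in> simplices G \<Longrightarrow> x \<subseteq> verts G"
  by (simp add: simplices_def)

lemma finite_simplices: "finite (verts G) \<Longrightarrow> finite (simplices G)"
  by (rule finite_subset[of _ "Pow (verts G)"]) (auto simp: simplices_def)

lemma singleton_in_simplices: "a \<in> verts G \<Longrightarrow> {a} \<in> simplices G"
  by (simp add: simplices_def)

lemma insert_insert_in_simplices:
  assumes "insert c A \<in> simplices G" "insert c' A \<in> simplices G" "c = c' \<or> {c, c'} \<in> edges G"
  shows "insert c' (insert c A) \<in> simplices G"
  using assms unfolding simplices_def by (auto simp: insert_commute)

(* Reflexive, unlike adjacency in the strong product; rel_graph ignores loops. *)
definition strong_adj :: "'a graph \<Rightarrow> 'b graph \<Rightarrow> 'a \<times> 'b \<Rightarrow> 'a \<times> 'b \<Rightarrow> bool" where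
  "strong_adj G H p q \<longleftrightarrow>
     (fst p = fst q \<or> {fst p, fst q} \<in> edges G) \<and> (snd p = snd q \<or> {snd p, snd q} \<in> edges H)"

lemma strong_prod_eq_rel_graph:
  "strong_prod G H = rel_graph id (verts G \<times> verts H) (strong_adj G H)"
proof (rule graph_eqI)
  have adj: "(a, b) \<noteq> (c, d) \<Longrightarrow>
      ((a = c \<and> {b, d} \<in> edges H) \<or> (b = d \<and> {a, c} \<in> edges G) \<or>
       ({a, c} \<in> edges G \<and> {b, d} \<in> edges H)) \<longleftrightarrow> strong_adj G H (a, b) (c, d)" for a b c d
    by (auto simp: strong_adj_def)
  have "edges (strong_prod G H) = {{(a, b), (c, d)} | a b c d. (a, b) \<in> verts G \<times> verts H \<and>
      (c, d) \<in> verts G \<times> verts H \<and> (a, b) \<noteq> (c, d) \<and> strong_adj G H (a, b) (c, d)}"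
    unfolding strong_prod_def edges_Pair using adj by (intro Collect_cong ex_cong1) auto
  also have "\<dots> = edges (rel_graph id (verts G \<times> verts H) (strong_adj G H))"
    unfolding edges_rel_graph id_apply by (rule setcompr_Pair_Pair)
  finally show "edges (strong_prod G H) =
      edges (rel_graph id (verts G \<times> verts H) (strong_adj G H))" .
qed (simp add: strong_prod_def verts_def rel_graph_def)

lemma simplex_prod_eq_rel_graph:
  "simplex_prod G H = rel_graph id (simplices G \<times> simplices H) (\<lambda>s t. s \<le> t \<or> t \<le> s)"
proof (rule graph_eqI)
  have "edges (simplex_prod G H) = {{(x, y), (u, v)} | x y u v.
      (x, y) \<in> simplices G \<times> simplices H \<and> (u, v) \<in> simplices G \<times> simplices H \<and>
      (x, y) \<noteq> (u, v) \<and> ((x, y) \<le> (u, v) \<or> (u, v) \<le> (x, y))}"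
    unfolding simplex_prod_def edges_Pair by (intro Collect_cong ex_cong1) auto
  also have "\<dots> = edges (rel_graph id (simplices G \<times> simplices H) (\<lambda>s t. s \<le> t \<or> t \<le> s))"
    unfolding edges_rel_graph id_apply by (rule setcompr_Pair_Pair)
  finally show "edges (simplex_prod G H) =
      edges (rel_graph id (simplices G \<times> simplices H) (\<lambda>s t. s \<le> t \<or> t \<le> s))" .
qed (simp add: simplex_prod_def verts_def rel_graph_def)

lemma strong_adj_sym: "strong_adj G H p q = strong_adj G H q p"
  by (auto simp: strong_adj_def insert_commute)

lemma strong_adj_in_simplices:
  assumes "x \<in> simplices G" "y \<in> simplices H" "p \<in> x \<times> y" "q \<in> x \<times> y"
  shows "strong_adj G H p q"
  using assms unfolding strong_adj_def simplices_def mem_Times_iff by blast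

definition down_closed :: "'a::order set \<Rightarrow> 'a set \<Rightarrow> bool" where
  "down_closed S D \<longleftrightarrow> D \<subseteq> S \<and> (\<forall>t\<in>D. \<forall>u\<in>S. u \<le> t \<longrightarrow> u \<in> D)"

lemma down_closed_Diff_maximal:
  assumes "down_closed S D" "\<And>t. t \<in> D \<Longrightarrow> s \<le> t \<Longrightarrow> t = s"
  shows "down_closed S (D - {s})"
  using assms unfolding down_closed_def by blast

lemma down_closed_strictly_below:
  assumes "down_closed S D"
  shows "down_closed S {t \<in> D. t < s}"
  using assms unfolding down_closed_def by (auto intro: le_less_trans)

fun cylinder_adj :: "'a graph \<Rightarrow> 'b graph \<Rightarrow> ('a \<times> 'b) + ('a set \<times> 'b set) \<Rightarrow>
    ('a \<times> 'b) + ('a set \<times> 'b set) \<Rightarrow> bool" where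
  "cylinder_adj G H (Inl p) (Inl q) = strong_adj G H p q"
| "cylinder_adj G H (Inl p) (Inr t) = (p \<in> fst t \<times> snd t)"
| "cylinder_adj G H (Inr s) (Inl q) = (q \<in> fst s \<times> snd s)"
| "cylinder_adj G H (Inr s) (Inr t) = (s \<le> t \<or> t \<le> s)"

lemma rel_nbrs_cylinder_Inl:
  "rel_nbrs (Inl ` P \<union> Inr ` E) (cylinder_adj G H) (Inl p) =
     Inl ` {q \<in> P. q \<noteq> p \<and> strong_adj G H p q} \<union> Inr ` {t \<in> E. p \<in> fst t \<times> snd t}"
  by (auto simp: rel_nbrs_def strong_adj_sym)

lemma rel_nbrs_cylinder_Inr_maximal:
  assumes "fst s \<times> snd s \<subseteq> P" "\<And>t. t \<in> E \<Longrightarrow> s \<le> t \<Longrightarrow> t = s"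
  shows "rel_nbrs (Inl ` P \<union> Inr ` E) (cylinder_adj G H) (Inr s) =
     Inl ` (fst s \<times> snd s) \<union> Inr ` {t \<in> E. t < s}"
  using assms by (auto simp: rel_nbrs_def less_le)

lemma gmap_strong_prod:
  "gmap (h \<circ> Inl) (strong_prod G H) = rel_graph h (Inl ` (verts G \<times> verts H)) (cylinder_adj G H)"
  using rel_graph_comp_inj[OF inj_Inl, of h "verts G \<times> verts H" "cylinder_adj G H"]
  by (simp add: strong_prod_eq_rel_graph gmap_rel_graph)

lemma gmap_simplex_prod:
  "gmap (h \<circ> Inr) (simplex_prod G H) = rel_graph h (Inr ` (simplices G \<times> simplices H)) (cylinder_adj G H)"
  using rel_graph_comp_inj[OF inj_Inr, of h "simplices G \<times> simplices H" "cylinder_adj G H"]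
  by (simp add: simplex_prod_eq_rel_graph gmap_rel_graph)

(* The glued graph of the header, with vertices relabelled by h: homotopy is defined for
   graphs on nat, so h will be an injection into nat. *)
locale product_cylinder =
  fixes G :: "'a graph" and H :: "'b graph" and h :: "('a \<times> 'b) + ('a set \<times> 'b set) \<Rightarrow> 'c"
  assumes finite_verts_G: "finite (verts G)" and finite_verts_H: "finite (verts H)"
    and inj_on_h: "inj_on h (Inl ` (verts G \<times> verts H) \<union> Inr ` (simplices G \<times> simplices H))"
begin

abbreviation vertex_pairs :: "('a \<times> 'b) set" where
  "vertex_pairs \<equiv> verts G \<times> verts H"

abbreviation simplex_pairs :: "('a set \<times> 'b set) set" where
  "simplex_pairs \<equiv> simplices G \<times> simplices H"

abbreviation cyl :: "(('a \<times> 'b) + ('a set \<times> 'b set)) set \<Rightarrow> 'c graph" where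
  "cyl V \<equiv> rel_graph h V (cylinder_adj G H)"

lemma finite_simplex_pairs: "finite simplex_pairs"
  using finite_verts_G finite_verts_H by (simp add: finite_simplices)

lemma finite_inj_on_h:
  assumes "P \<subseteq> vertex_pairs" "E \<subseteq> simplex_pairs"
  shows "finite (Inl ` P \<union> Inr ` E)" "inj_on h (Inl ` P \<union> Inr ` E)"
proof -
  have "Inl ` P \<union> Inr ` E \<subseteq> Inl ` vertex_pairs \<union> Inr ` simplex_pairs"
    using assms by blast
  then show "finite (Inl ` P \<union> Inr ` E)" "inj_on h (Inl ` P \<union> Inr ` E)"
    using finite_verts_G finite_verts_H finite_simplex_pairs inj_on_subset[OF inj_on_h]
    by (auto intro: finite_subset)
qed

lemma contractible_cyl_below:
  assumes "down_closed simplex_pairs E" "(x, y) \<in> simplex_pairs" "\<forall>t\<in>E. t \<le> (x, y)"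
  shows "contractible (cyl (Inl ` (x \<times> y) \<union> Inr ` E))"
proof -
  have "finite E"
    using assms(1) finite_simplex_pairs by (auto simp: down_closed_def intro: finite_subset)
  then show ?thesis
    using assms
  proof (induction E arbitrary: x y rule: finite_psubset_induct)
    case (psubset E)
    have "x \<times> y \<subseteq> vertex_pairs" "E \<subseteq> simplex_pairs"
      using psubset.prems(1,2) by (auto simp: down_closed_def dest: simplices_subset_verts)
    note V = finite_inj_on_h[OF this]
    show ?case
    proof (cases "E = {}")
      case True
      obtain a b where "a \<in> x" "b \<in> y"
        using psubset.prems(2) by (auto simp: simplices_def)
      with psubset.prems(2) V True show ?thesis
        by (intro contractible_rel_graph_cone[of _ _ "Inl (a, b)"])
          (auto intro: strong_adj_in_simplices)
    next
      case False
      then obtain s where s: "s \<in> E" "\<And>t. t \<in> E \<Longrightarrow> s \<le> t \<Longrightarrow> t = s"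
        using finite_has_maximal[OF psubset.hyps] by blast
      have s_le: "s \<le> (x, y)" and s_in: "s \<in> simplex_pairs"
        using psubset.prems(1,3) s(1) by (auto simp: down_closed_def)
      have "fst s \<times> snd s \<subseteq> x \<times> y"
        using s_le by (auto simp: less_eq_prod_def)
      then have "rel_nbrs (Inl ` (x \<times> y) \<union> Inr ` E) (cylinder_adj G H) (Inr s) =
          Inl ` (fst s \<times> snd s) \<union> Inr ` {t \<in> E. t < s}"
        using s(2) by (rule rel_nbrs_cylinder_Inr_maximal)
      moreover have "contractible (cyl (Inl ` (fst s \<times> snd s) \<union> Inr ` {t \<in> E. t < s}))"
        using psubset.prems(1) s_in s(1)
        by (intro psubset.IH) (auto intro: down_closed_strictly_below dest: less_imp_le)
      ultimately have "contractible (cyl (rel_nbrs (Inl ` (x \<times> y) \<union> Inr ` E) (cylinder_adj G H) (Inr s)))"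
        by simp
      moreover have "Inl ` (x \<times> y) \<union> Inr ` E - {Inr s} = Inl ` (x \<times> y) \<union> Inr ` (E - {s})"
        by auto
      then have "contractible (cyl (Inl ` (x \<times> y) \<union> Inr ` E - {Inr s}))"
        using psubset.prems s by (simp only:) (intro psubset.IH; auto intro: down_closed_Diff_maximal)
      ultimately show ?thesis
        using contractible_rel_graph_step[OF V(2), of "Inr s"] s(1) by simp
    qed
  qed
qed

lemma contractible_cyl_above:
  assumes "(A, B) \<in> simplex_pairs" "\<forall>q\<in>Q. (insert (fst q) A, insert (snd q) B) \<in> simplex_pairs"
  shows "contractible (cyl (Inl ` Q \<union> Inr ` {t \<in> simplex_pairs. (A, B) \<le> t}))"
proof -
  have "Q \<subseteq> vertex_pairs"
    using assms(2) by (auto dest!: bspec simplices_subset_verts)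
  then have "finite Q"
    using finite_verts_G finite_verts_H by (auto intro: finite_subset)
  then show ?thesis
    using assms
  proof (induction Q arbitrary: A B rule: finite_psubset_induct)
    case (psubset Q)
    have "Q \<subseteq> vertex_pairs"
      using psubset.prems(2) by (auto dest!: bspec simplices_subset_verts)
    note V = finite_inj_on_h[OF this, of "{t \<in> simplex_pairs. (A, B) \<le> t}"]
    show ?case
    proof (cases "Q = {}")
      case True
      with psubset.prems(1) V show ?thesis
        by (intro contractible_rel_graph_cone[of _ _ "Inr (A, B)"]) auto
    next
      case False
      then obtain q where q: "q \<in> Q"
        by blast
      define A' B' where "A' = insert (fst q) A" and "B' = insert (snd q) B"
      have "{t \<in> simplex_pairs. (A, B) \<le> t \<and> q \<in> fst t \<times> snd t} = {t \<in> simplex_pairs. (A', B') \<le> t}"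
        by (auto simp: A'_def B'_def mem_Times_iff)
      then have "rel_nbrs (Inl ` Q \<union> Inr ` {t \<in> simplex_pairs. (A, B) \<le> t}) (cylinder_adj G H) (Inl q) =
          Inl ` {q' \<in> Q. q' \<noteq> q \<and> strong_adj G H q q'} \<union> Inr ` {t \<in> simplex_pairs. (A', B') \<le> t}"
        by (simp add: rel_nbrs_cylinder_Inl)
      moreover have "contractible (cyl (Inl ` {q' \<in> Q. q' \<noteq> q \<and> strong_adj G H q q'} \<union>
          Inr ` {t \<in> simplex_pairs. (A', B') \<le> t}))"
      proof (rule psubset.IH)
        show "{q' \<in> Q. q' \<noteq> q \<and> strong_adj G H q q'} \<subset> Q"
          using q by blast
        show "(A', B') \<in> simplex_pairs"
          using psubset.prems(2) q by (simp add: A'_def B'_def)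
        show "\<forall>q'\<in>{q' \<in> Q. q' \<noteq> q \<and> strong_adj G H q q'}.
            (insert (fst q') A', insert (snd q') B') \<in> simplex_pairs"
          using psubset.prems(2) q unfolding A'_def B'_def
          by (auto simp: strong_adj_def intro!: insert_insert_in_simplices)
      qed
      ultimately have "contractible (cyl (rel_nbrs (Inl ` Q \<union> Inr ` {t \<in> simplex_pairs. (A, B) \<le> t})
          (cylinder_adj G H) (Inl q)))"
        by simp
      moreover have "Inl ` Q \<union> Inr ` {t \<in> simplex_pairs. (A, B) \<le> t} - {Inl q} =
          Inl ` (Q - {q}) \<union> Inr ` {t \<in> simplex_pairs. (A, B) \<le> t}"
        by auto
      then have "contractible (cyl (Inl ` Q \<union> Inr ` {t \<in> simplex_pairs. (A, B) \<le> t} - {Inl q}))"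
        using psubset.prems q by (simp only:) (intro psubset.IH; auto)
      ultimately show ?thesis
        using contractible_rel_graph_step[OF V(2), of "Inl q"] q by simp
    qed
  qed
qed

lemma cyl_add_simplex_pairs:
  assumes "down_closed simplex_pairs D"
  shows "homotopy_step\<^sup>*\<^sup>* (cyl (Inl ` vertex_pairs)) (cyl (Inl ` vertex_pairs \<union> Inr ` D))"
proof -
  have "finite D"
    using assms finite_simplex_pairs by (auto simp: down_closed_def intro: finite_subset)
  then show ?thesis
    using assms
  proof (induction D rule: finite_psubset_induct)
    case (psubset D)
    show ?case
    proof (cases "D = {}")
      case False
      then obtain s where s: "s \<in> D" "\<And>t. t \<in> D \<Longrightarrow> s \<le> t \<Longrightarrow> t = s"
        using finite_has_maximal[OF psubset.hyps] by blast
      have s_in: "s \<in> simplex_pairs" "D \<subseteq> simplex_pairs"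
        using psubset.prems s(1) by (auto simp: down_closed_def)
      note V = finite_inj_on_h[OF subset_refl s_in(2)]
      have "fst s \<times> snd s \<subseteq> vertex_pairs"
        using s_in(1) by (auto simp: simplices_def)
      then have "rel_nbrs (Inl ` vertex_pairs \<union> Inr ` D) (cylinder_adj G H) (Inr s) =
          Inl ` (fst s \<times> snd s) \<union> Inr ` {t \<in> D. t < s}"
        using s(2) by (rule rel_nbrs_cylinder_Inr_maximal)
      moreover have "contractible (cyl (Inl ` (fst s \<times> snd s) \<union> Inr ` {t \<in> D. t < s}))"
        using psubset.prems s_in
        by (intro contractible_cyl_below) (auto intro: down_closed_strictly_below dest: less_imp_le)
      ultimately have "homotopy_step (cyl (Inl ` vertex_pairs \<union> Inr ` D - {Inr s}))
          (cyl (Inl ` vertex_pairs \<union> Inr ` D))"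
        using homotopy_step_rel_graph(2)[OF V, of "Inr s"] s(1) by simp
      moreover have "Inl ` vertex_pairs \<union> Inr ` D - {Inr s} = Inl ` vertex_pairs \<union> Inr ` (D - {s})"
        by auto
      moreover have "homotopy_step\<^sup>*\<^sup>* (cyl (Inl ` vertex_pairs)) (cyl (Inl ` vertex_pairs \<union> Inr ` (D - {s})))"
        using psubset.prems s by (intro psubset.IH) (auto intro: down_closed_Diff_maximal)
      ultimately show ?thesis
        by (simp add: rtranclp.rtrancl_into_rtrancl)
    qed simp
  qed
qed

lemma cyl_remove_vertex_pairs:
  assumes "W \<subseteq> vertex_pairs"
  shows "homotopy_step\<^sup>*\<^sup>* (cyl (Inl ` W \<union> Inr ` simplex_pairs)) (cyl (Inr ` simplex_pairs))"
proof -
  have "finite W"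
    using assms finite_verts_G finite_verts_H by (auto intro: finite_subset)
  then show ?thesis
    using assms
  proof (induction W rule: finite_induct)
    case (insert w W)
    note V = finite_inj_on_h[OF insert.prems subset_refl]
    have "{t \<in> simplex_pairs. w \<in> fst t \<times> snd t} = {t \<in> simplex_pairs. ({fst w}, {snd w}) \<le> t}"
      by (auto simp: mem_Times_iff)
    then have "rel_nbrs (Inl ` insert w W \<union> Inr ` simplex_pairs) (cylinder_adj G H) (Inl w) =
        Inl ` {q \<in> insert w W. q \<noteq> w \<and> strong_adj G H w q} \<union> Inr ` {t \<in> simplex_pairs. ({fst w}, {snd w}) \<le> t}"
      by (simp only: rel_nbrs_cylinder_Inl)
    moreover have "contractible (cyl (Inl ` {q \<in> insert w W. q \<noteq> w \<and> strong_adj G H w q} \<union>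
        Inr ` {t \<in> simplex_pairs. ({fst w}, {snd w}) \<le> t}))"
      using insert.prems
      by (intro contractible_cyl_above)
        (auto simp: strong_adj_def singleton_in_simplices intro!: insert_insert_in_simplices[where A = "{}"])
    ultimately have "homotopy_step (cyl (Inl ` insert w W \<union> Inr ` simplex_pairs))
        (cyl (Inl ` insert w W \<union> Inr ` simplex_pairs - {Inl w}))"
      using homotopy_step_rel_graph(1)[OF V, of "Inl w"] by simp
    moreover have "Inl ` insert w W \<union> Inr ` simplex_pairs - {Inl w} = Inl ` W \<union> Inr ` simplex_pairs"
      using insert.hyps(2) by auto
    ultimately show ?case
      using insert.IH insert.prems by (auto intro: converse_rtranclp_into_rtranclp)
  qed simp
qed

lemma cyl_vertex_pairs_homotopic_simplex_pairs:
  "homotopy_step\<^sup>*\<^sup>* (cyl (Inl ` vertex_pairs)) (cyl (Inr ` simplex_pairs))"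
  using cyl_add_simplex_pairs[of simplex_pairs] cyl_remove_vertex_pairs[of vertex_pairs]
  by (simp add: down_closed_def)

end

theorem mainTheorem2:
  fixes G :: "'a graph" and H :: "'b graph"
  assumes "finite_simple_graph G" and "finite_simple_graph H"
  shows "homotopic (strong_prod G H) (simplex_prod G H)"
proof -
  let ?U = "Inl ` (verts G \<times> verts H) \<union> Inr ` (simplices G \<times> simplices H)"
  have fin: "finite (verts G)" "finite (verts H)"
    using assms by (simp_all add: finite_simple_graph_def)
  then obtain h :: "('a \<times> 'b) + ('a set \<times> 'b set) \<Rightarrow> nat" where h: "inj_on h ?U"
    using finite_imp_inj_to_nat_seg[of ?U] by (auto simp: finite_simplices)
  interpret product_cylinder G H h
    using fin h by unfold_locales
  have "inj_on (h \<circ> Inl) (verts (strong_prod G H))" "inj_on (h \<circ> Inr) (verts (simplex_prod G H))"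
    by (auto simp: strong_prod_eq_rel_graph simplex_prod_eq_rel_graph
        intro!: comp_inj_on inj_on_subset[OF h])
  then show ?thesis
    using cyl_vertex_pairs_homotopic_simplex_pairs unfolding homotopic_def
    by (intro exI[of _ "h \<circ> Inl"] exI[of _ "h \<circ> Inr"]) (simp add: gmap_strong_prod gmap_simplex_prod)
qed

end
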